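(* Let $G=(V,E)$ be a fixed graph, $v,u$ two non-adjacent vertices, and $k$ an integer. Assume that for some $\alpha\in[0,1]$, for all $c,q\in[k]$ with $c\ne q$, the set $\Omega(c,c)$ is $\alpha$-isomorphic to $\Omega(q,c)$ with $\alpha$-function $H(\cdot,q)$. Let $\nu$ be the uniform distribution over the good $k$-colourings of $G$, and let $\nu'$ be the distribution of the output of STEP when its input colouring is uniformly distributed over the $k$-colourings of $G$. Then $\|\nu-\nu'\|\le\alpha$.
   Context: $[k]=\{1,\dots,k\}$; $\Omega$ is the set of proper $k$-colourings of $G$ (assumed non-empty), $\sigma_w$ the colour of $w$, and $\Omega(c,q)$ the set of $\sigma\in\Omega$ with $\sigma_v=c,\sigma_u=q$. A colouring $\sigma$ is good if $\sigma_v\ne\sigma_u$ and bad otherwise. $\|\nu_a-\nu_b\|=\max_{A\subseteq[k]^V}|\nu_a(A)-\nu_b(A)|$. Disagreement graph: for $\sigma\in\Omega$ and $q\ne\sigma_v$, $Q_{\sigma_v,q}$ is the subgraph induced by all vertices reachable from $v$ by a path in $G$ all of whose vertices have colour in $\{\sigma_v,q\}$. The $q$-switching $H(\sigma,q)$ swaps the colours $\sigma_v$ and $q$ on the vertices of $Q_{\sigma_v,q}$, leaving other vertices unchanged. STEP: on input $X\in\Omega$, if $X$ is good output $X$; if $X$ is bad choose $q$ uniformly at random from $[k]\setminus\{X(v)\}$ and output $H(X,q)$. $\alpha$-isomorphism: $\Omega_1$ is $\alpha$-isomorphic to $\Omega_2$ if there exist $\Omega_1'\subseteq\Omega_1$,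 $\Omega_2'\subseteq\Omega_2$ with $|\Omega_i'|\ge(1-\alpha)|\Omega_i|$ ($i=1,2$) and a bijection $h:\Omega_1'\to\Omega_2'$; a map $F:\Omega_1\to[k]^V$ is an $\alpha$-function (for such a pair and bijection) if $F(\sigma)=h(\sigma)$ for all $\sigma\in\Omega_1'$. *)

theory Defs
  imports "HOL-Probability.Probability"
begin

definition simple_graph :: "'a set \<Rightarrow> ('a \<Rightarrow> 'a \<Rightarrow> bool) \<Rightarrow> bool" where
  "simple_graph V E \<longleftrightarrow> finite V \<and> (\<forall>x y. E x y \<longrightarrow> x \<in> V \<and> y \<in> V)
     \<and> (\<forall>x y. E x y \<longrightarrow> E y x) \<and> (\<forall>x. \<not> E x x)"

definition colourings :: "'a set \<Rightarrow> ('a \<Rightarrow> 'a \<Rightarrow> bool) \<Rightarrow> nat \<Rightarrow> ('a \<Rightarrow> nat) set" where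
  "colourings V E k = {\<sigma> \<in> V \<rightarrow>\<^sub>E {1..k}. \<forall>x\<in>V. \<forall>y\<in>V. E x y \<longrightarrow> \<sigma> x \<noteq> \<sigma> y}"

definition colourings_vu :: "'a set \<Rightarrow> ('a \<Rightarrow> 'a \<Rightarrow> bool) \<Rightarrow> nat \<Rightarrow> 'a \<Rightarrow> 'a \<Rightarrow> nat \<Rightarrow> nat \<Rightarrow> ('a \<Rightarrow> nat) set" where
  "colourings_vu V E k v u c q = {\<sigma> \<in> colourings V E k. \<sigma> v = c \<and> \<sigma> u = q}"

definition good :: "'a \<Rightarrow> 'a \<Rightarrow> ('a \<Rightarrow> nat) \<Rightarrow> bool" where
  "good v u \<sigma> \<longleftrightarrow> \<sigma> v \<noteq> \<sigma> u"

definition disagreement :: "'a set \<Rightarrow> ('a \<Rightarrow> 'a \<Rightarrow> bool) \<Rightarrow> 'a \<Rightarrow> ('a \<Rightarrow> nat) \<Rightarrow> nat \<Rightarrow> 'a set" where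
  "disagreement V E v \<sigma> q =
     {w. (\<lambda>x y. E x y \<and> x \<in> V \<and> y \<in> V \<and> \<sigma> x \<in> {\<sigma> v, q} \<and> \<sigma> y \<in> {\<sigma> v, q})\<^sup>*\<^sup>* v w}"

definition switching :: "'a set \<Rightarrow> ('a \<Rightarrow> 'a \<Rightarrow> bool) \<Rightarrow> 'a \<Rightarrow> ('a \<Rightarrow> nat) \<Rightarrow> nat \<Rightarrow> ('a \<Rightarrow> nat)" where
  "switching V E v \<sigma> q = (\<lambda>w. if w \<in> disagreement V E v \<sigma> q
       then (if \<sigma> w = \<sigma> v then q else if \<sigma> w = q then \<sigma> v else \<sigma> w) else \<sigma> w)"

definition STEP :: "'a set \<Rightarrow> ('a \<Rightarrow> 'a \<Rightarrow> bool) \<Rightarrow> nat \<Rightarrow> 'a \<Rightarrow> 'a \<Rightarrow> ('a \<Rightarrow> nat) \<Rightarrow> ('a \<Rightarrow> nat) pmf" where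
  "STEP V E k v u X = (if good v u X then return_pmf X
     else map_pmf (\<lambda>q. switching V E v X q) (pmf_of_set ({1..k} - {X v})))"

definition alpha_iso_fun :: "real \<Rightarrow> 'b set \<Rightarrow> 'c set \<Rightarrow> ('b \<Rightarrow> 'c) \<Rightarrow> bool" where
  "alpha_iso_fun \<alpha> \<Omega>1 \<Omega>2 F \<longleftrightarrow> (\<exists>\<Omega>1' \<Omega>2' h. \<Omega>1' \<subseteq> \<Omega>1 \<and> \<Omega>2' \<subseteq> \<Omega>2
      \<and> real (card \<Omega>1') \<ge> (1 - \<alpha>) * real (card \<Omega>1)
      \<and> real (card \<Omega>2') \<ge> (1 - \<alpha>) * real (card \<Omega>2)
      \<and> bij_betw h \<Omega>1' \<Omega>2' \<and> (\<forall>\<sigma>\<in>\<Omega>1'. F \<sigma> = h \<sigma>))"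

definition tv_dist :: "('a \<Rightarrow> nat) set \<Rightarrow> ('a \<Rightarrow> nat) pmf \<Rightarrow> ('a \<Rightarrow> nat) pmf \<Rightarrow> real" where
  "tv_dist S p q = (SUP A \<in> Pow S. \<bar>measure_pmf.prob p A - measure_pmf.prob q A\<bar>)"

end

theory Submission
  imports Defs
begin

text \<open>Every good colouring is fixed by STEP, so under \<open>\<nu>'\<close> it has probability at least
  \<open>1/|\<Omega>|\<close>; if moreover it is the \<open>q\<close>-switching of a bad colouring, which STEP picks with
  probability \<open>1/(k-1)\<close>, it has probability at least \<open>(1 + 1/(k-1))/|\<Omega>|\<close>. The
  \<open>\<alpha>\<close>-isomorphisms \<open>\<Omega>(c,c) \<rightarrow> \<Omega>(q,c)\<close> show that such colourings make up a
  \<open>(1-\<alpha>)\<close>-fraction of the good colourings and number at least \<open>(1-\<alpha>)(k-1)\<close> times the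
  bad ones. Hence the total amount by which \<open>\<nu>'\<close> falls short of the uniform density on good
  colourings is at most \<open>\<alpha>\<close>, which bounds \<open>\<nu>(A) - \<nu>'(A)\<close>, and by complementation
  \<open>|\<nu>(A) - \<nu>'(A)|\<close>.\<close>

lemma tv_dist_pmf_of_set_le:
  assumes "finite G" "G \<noteq> {}"
    and deficit: "(\<Sum>\<sigma>\<in>G. max 0 (1 / card G - pmf p \<sigma>)) \<le> a"
  shows "tv_dist S (pmf_of_set G) p \<le> a"
proof -
  have one_sided: "measure_pmf.prob (pmf_of_set G) A - measure_pmf.prob p A \<le> a" for A
  proof -
    have "measure_pmf.prob (pmf_of_set G) A = (\<Sum>\<sigma>\<in>G \<inter> A. 1 / card G)"
      using measure_pmf_of_set[OF assms(2,1)] by simp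
    moreover have "(\<Sum>\<sigma>\<in>G \<inter> A. pmf p \<sigma>) \<le> measure_pmf.prob p A"
      using measure_measure_pmf_finite[of "G \<inter> A" p] assms(1)
        measure_pmf.finite_measure_mono[of "G \<inter> A" A p] by simp
    ultimately have "measure_pmf.prob (pmf_of_set G) A - measure_pmf.prob p A
        \<le> (\<Sum>\<sigma>\<in>G \<inter> A. 1 / card G - pmf p \<sigma>)"
      by (simp add: sum_subtractf)
    also have "\<dots> \<le> (\<Sum>\<sigma>\<in>G \<inter> A. max 0 (1 / card G - pmf p \<sigma>))"
      by (intro sum_mono) simp
    also have "\<dots> \<le> (\<Sum>\<sigma>\<in>G. max 0 (1 / card G - pmf p \<sigma>))"
      using assms(1) by (intro sum_mono2) auto
    finally show ?thesis using deficit by simp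
  qed
  have "\<bar>measure_pmf.prob (pmf_of_set G) A - measure_pmf.prob p A\<bar> \<le> a" for A
    using one_sided[of A] one_sided[of "UNIV - A"]
      measure_pmf.prob_compl[of A "pmf_of_set G"] measure_pmf.prob_compl[of A p] by simp
  then show ?thesis
    unfolding tv_dist_def by (intro cSUP_least) auto
qed

text \<open>The deficit of a density bounded below by \<open>1/(g+b)\<close> on \<open>g\<close> points, of which \<open>w\<close>
  get the larger bound \<open>(1 + 1/K)/(g+b)\<close>, measured against the uniform density \<open>1/g\<close>.\<close>
lemma two_level_deficit_le:
  fixes g b w K \<alpha> :: real
  assumes g: "g > 0" and b: "b \<ge> 0" and K: "K \<ge> 1" and "0 \<le> \<alpha>"
    and w_ge_g: "(1 - \<alpha>) * g \<le> w" and w_ge_b: "(1 - \<alpha>) * K * b \<le> w"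
  shows "(g - w) * max 0 (1/g - 1/(g+b)) + w * max 0 (1/g - 1/(g+b) - 1/((g+b)*K)) \<le> \<alpha>"
proof -
  define n where "n = g + b"
  have n: "n > 0" using g b n_def by simp
  have gap: "1/g - 1/n = b/(g*n)" using g n n_def by (simp add: field_simps)
  have gap_nonneg: "b/(g*n) \<ge> 0" using g n b by simp
  have "\<alpha> * (b/n) \<le> \<alpha>"
    using n b g \<open>0 \<le> \<alpha>\<close> n_def by (intro mult_left_le) auto
  moreover have "(g - w) * max 0 (1/g - 1/n) + w * max 0 (1/g - 1/n - 1/(n*K)) \<le> \<alpha> * (b/n)"
  proof (cases "1/g - 1/n - 1/(n*K) \<le> 0")
    case True
    have "(g - w) * max 0 (1/g - 1/n) + w * max 0 (1/g - 1/n - 1/(n*K)) = (g - w) * (b/(g*n))"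
      using True gap gap_nonneg by simp
    also have "\<dots> \<le> (\<alpha> * g) * (b/(g*n))"
      using w_ge_g gap_nonneg by (intro mult_right_mono) (auto simp: algebra_simps)
    also have "\<dots> = \<alpha> * (b/n)" using g by (simp add: field_simps)
    finally show ?thesis .
  next
    case False
    have "(g - w) * max 0 (1/g - 1/n) + w * max 0 (1/g - 1/n - 1/(n*K))
        = (g - w) * (b/(g*n)) + w * (b/(g*n) - 1/(n*K))"
      using False gap gap_nonneg by simp
    also have "\<dots> = b/n - w/(n*K)" using g n K by (simp add: field_simps)
    also have "\<dots> \<le> b/n - ((1 - \<alpha>) * K * b)/(n*K)"
      using w_ge_b n K by (intro diff_left_mono divide_right_mono) auto
    also have "\<dots> = \<alpha> * (b/n)" using n K by (simp add: field_simps)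
    finally show ?thesis .
  qed
  ultimately show ?thesis unfolding n_def by linarith
qed

lemma sum_deficit_le:
  fixes f :: "'b \<Rightarrow> real" and b K \<alpha> :: real
  assumes "finite G" "G \<noteq> {}" "W \<subseteq> G" "b \<ge> 0" "K \<ge> 1" "0 \<le> \<alpha>"
    and "(1 - \<alpha>) * card G \<le> card W" "(1 - \<alpha>) * K * b \<le> card W"
    and ge_G: "\<forall>\<sigma>\<in>G. 1 / (card G + b) \<le> f \<sigma>"
    and ge_W: "\<forall>\<sigma>\<in>W. (1 + 1/K) / (card G + b) \<le> f \<sigma>"
  shows "(\<Sum>\<sigma>\<in>G. max 0 (1 / card G - f \<sigma>)) \<le> \<alpha>"
proof -
  define g where "g = real (card G)"
  have fin_W: "finite W" using assms(1,3) finite_subset by blast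
  have "g > 0" using assms(1,2) g_def by (simp add: card_gt_0_iff)
  have bound_split: "(1 + 1/K) / (g + b) = 1/(g + b) + 1/((g + b) * K)"
    by (simp add: add_divide_distrib)
  have "(\<Sum>\<sigma>\<in>G. max 0 (1/g - f \<sigma>))
      = (\<Sum>\<sigma>\<in>G - W. max 0 (1/g - f \<sigma>)) + (\<Sum>\<sigma>\<in>W. max 0 (1/g - f \<sigma>))"
    using sum.subset_diff[OF assms(3,1)] by simp
  also have "\<dots> \<le> (\<Sum>\<sigma>\<in>G - W. max 0 (1/g - 1/(g+b)))
                + (\<Sum>\<sigma>\<in>W. max 0 (1/g - 1/(g+b) - 1/((g+b)*K)))"
    using ge_G ge_W assms(3) bound_split unfolding g_def
    by (intro add_mono sum_mono) (auto simp: algebra_simps)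
  also have "\<dots> = (g - card W) * max 0 (1/g - 1/(g+b))
                + card W * max 0 (1/g - 1/(g+b) - 1/((g+b)*K))"
    using card_Diff_subset[OF fin_W assms(3)] card_mono[OF assms(1,3)]
    by (simp add: g_def of_nat_diff)
  also have "\<dots> \<le> \<alpha>"
    using \<open>g > 0\<close> assms(4-8) unfolding g_def
    by (intro two_level_deficit_le) auto
  finally show ?thesis unfolding g_def .
qed

definition distinct_colour_pairs :: "nat \<Rightarrow> (nat \<times> nat) set" where
  "distinct_colour_pairs k = (SIGMA c:{1..k}. {1..k} - {c})"

definition switch_reachable ::
    "'a set \<Rightarrow> ('a \<Rightarrow> 'a \<Rightarrow> bool) \<Rightarrow> nat \<Rightarrow> 'a \<Rightarrow> 'a \<Rightarrow> ('a \<Rightarrow> nat) set" where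
  "switch_reachable V E k v u = (\<Union>(c, q)\<in>distinct_colour_pairs k.
     colourings_vu V E k v u q c \<inter> (\<lambda>\<sigma>. switching V E v \<sigma> q) ` colourings_vu V E k v u c c)"

lemma finite_distinct_colour_pairs: "finite (distinct_colour_pairs k)"
  unfolding distinct_colour_pairs_def by auto

lemma finite_colourings: "finite V \<Longrightarrow> finite (colourings V E k)"
  unfolding colourings_def
  by (rule finite_subset[of _ "V \<rightarrow>\<^sub>E {1..k}"]) (auto intro: finite_PiE)

lemma colourings_range: "\<sigma> \<in> colourings V E k \<Longrightarrow> x \<in> V \<Longrightarrow> \<sigma> x \<in> {1..k}"
  unfolding colourings_def by auto

lemma finite_colourings_vu: "finite V \<Longrightarrow> finite (colourings_vu V E k v u c q)"
  unfolding colourings_vu_def by (simp add: finite_colourings)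

lemma good_colourings_eq_UN:
  assumes "v \<in> V" "u \<in> V"
  shows "{\<sigma> \<in> colourings V E k. good v u \<sigma>}
       = (\<Union>(c, q)\<in>distinct_colour_pairs k. colourings_vu V E k v u q c)"
  using colourings_range[OF _ assms(1)] colourings_range[OF _ assms(2)]
  unfolding distinct_colour_pairs_def colourings_vu_def good_def by fastforce

lemma bad_colourings_eq_UN:
  assumes "v \<in> V"
  shows "{\<sigma> \<in> colourings V E k. \<not> good v u \<sigma>} = (\<Union>c\<in>{1..k}. colourings_vu V E k v u c c)"
  using colourings_range[OF _ assms] unfolding colourings_vu_def good_def by fastforce

lemma switch_reachable_subset_good:
  "switch_reachable V E k v u \<subseteq> {\<sigma> \<in> colourings V E k. good v u \<sigma>}"
  unfolding switch_reachable_def distinct_colour_pairs_def colourings_vu_def good_def by auto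

lemma card_good_colourings:
  assumes "finite V" "v \<in> V" "u \<in> V"
  shows "card {\<sigma> \<in> colourings V E k. good v u \<sigma>}
       = (\<Sum>(c, q)\<in>distinct_colour_pairs k. card (colourings_vu V E k v u q c))"
  unfolding good_colourings_eq_UN[OF assms(2,3)] case_prod_beta
  by (intro card_UN_disjoint finite_distinct_colour_pairs)
     (auto simp: finite_colourings_vu[OF assms(1), unfolded colourings_vu_def] colourings_vu_def)

lemma card_bad_colourings:
  assumes "finite V" "v \<in> V"
  shows "(k - 1) * card {\<sigma> \<in> colourings V E k. \<not> good v u \<sigma>}
       = (\<Sum>(c, q)\<in>distinct_colour_pairs k. card (colourings_vu V E k v u c c))"
proof -
  have "card {\<sigma> \<in> colourings V E k. \<not> good v u \<sigma>}
      = (\<Sum>c\<in>{1..k}. card (colourings_vu V E k v u c c))"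
    unfolding bad_colourings_eq_UN[OF assms(2)]
    by (intro card_UN_disjoint)
       (auto simp: finite_colourings_vu[OF assms(1), unfolded colourings_vu_def] colourings_vu_def)
  then show ?thesis
    unfolding distinct_colour_pairs_def
    by (simp add: sum.Sigma[symmetric] sum_distrib_left mult.commute)
qed

lemma card_switch_reachable:
  assumes "finite V"
  shows "card (switch_reachable V E k v u) = (\<Sum>(c, q)\<in>distinct_colour_pairs k.
     card (colourings_vu V E k v u q c \<inter> (\<lambda>\<sigma>. switching V E v \<sigma> q) ` colourings_vu V E k v u c c))"
  unfolding switch_reachable_def case_prod_beta
  by (intro card_UN_disjoint finite_distinct_colour_pairs)
     (auto simp: finite_colourings_vu[OF assms(1), unfolded colourings_vu_def] colourings_vu_def)

lemma alpha_iso_fun_card_image_ge: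
  assumes "alpha_iso_fun \<alpha> A B F" "finite B"
  shows "(1 - \<alpha>) * card B \<le> card (B \<inter> F ` A)" "(1 - \<alpha>) * card A \<le> card (B \<inter> F ` A)"
proof -
  obtain A' B' h where "A' \<subseteq> A" "B' \<subseteq> B"
      and "(1 - \<alpha>) * card A \<le> card A'" "(1 - \<alpha>) * card B \<le> card B'"
      and h: "bij_betw h A' B'" "\<forall>\<sigma>\<in>A'. F \<sigma> = h \<sigma>"
    using assms(1) unfolding alpha_iso_fun_def by blast
  have "B' = F ` A'" using h by (simp add: bij_betw_def)
  then have "card B' \<le> card (B \<inter> F ` A)"
    using \<open>A' \<subseteq> A\<close> \<open>B' \<subseteq> B\<close> assms(2) by (intro card_mono) auto
  moreover have "card A' = card B'" using bij_betw_same_card[OF h(1)] .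
  ultimately show "(1 - \<alpha>) * card B \<le> card (B \<inter> F ` A)" "(1 - \<alpha>) * card A \<le> card (B \<inter> F ` A)"
    using \<open>(1 - \<alpha>) * card A \<le> card A'\<close> \<open>(1 - \<alpha>) * card B \<le> card B'\<close> by linarith+
qed

lemma card_switch_reachable_ge:
  assumes "finite V" "v \<in> V" "u \<in> V"
    and iso: "\<forall>c\<in>{1..k}. \<forall>q\<in>{1..k}. c \<noteq> q \<longrightarrow>
           alpha_iso_fun \<alpha> (colourings_vu V E k v u c c) (colourings_vu V E k v u q c)
             (\<lambda>\<sigma>. switching V E v \<sigma> q)"
  shows "(1 - \<alpha>) * card {\<sigma> \<in> colourings V E k. good v u \<sigma>} \<le> card (switch_reachable V E k v u)"
    and "(1 - \<alpha>) * real (k - 1) * card {\<sigma> \<in> colourings V E k. \<not> good v u \<sigma>}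
           \<le> card (switch_reachable V E k v u)"
proof -
  let ?\<Omega> = "colourings_vu V E k v u"
  let ?R = "\<lambda>c q. ?\<Omega> q c \<inter> (\<lambda>\<sigma>. switching V E v \<sigma> q) ` ?\<Omega> c c"
  have iso_pair: "alpha_iso_fun \<alpha> (?\<Omega> c c) (?\<Omega> q c) (\<lambda>\<sigma>. switching V E v \<sigma> q)"
    if "(c, q) \<in> distinct_colour_pairs k" for c q
    using iso that unfolding distinct_colour_pairs_def by auto
  have R: "real (card (switch_reachable V E k v u))
      = (\<Sum>(c, q)\<in>distinct_colour_pairs k. real (card (?R c q)))"
    using card_switch_reachable[OF assms(1)] by (simp add: case_prod_beta)
  have "(1 - \<alpha>) * card {\<sigma> \<in> colourings V E k. good v u \<sigma>}
      = (\<Sum>(c, q)\<in>distinct_colour_pairs k. (1 - \<alpha>) * card (?\<Omega> q c))"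
    unfolding card_good_colourings[OF assms(1-3)] by (simp add: sum_distrib_left case_prod_beta)
  also have "\<dots> \<le> (\<Sum>(c, q)\<in>distinct_colour_pairs k. real (card (?R c q)))"
    using alpha_iso_fun_card_image_ge(1)[OF iso_pair finite_colourings_vu[OF assms(1)]]
    by (intro sum_mono) auto
  finally show "(1 - \<alpha>) * card {\<sigma> \<in> colourings V E k. good v u \<sigma>} \<le> card (switch_reachable V E k v u)"
    using R by simp
  have bad: "real (k - 1) * card {\<sigma> \<in> colourings V E k. \<not> good v u \<sigma>}
      = (\<Sum>(c, q)\<in>distinct_colour_pairs k. real (card (?\<Omega> c c)))"
    using arg_cong[OF card_bad_colourings[OF assms(1,2), where E = E and k = k and u = u], of real]
    by (simp add: case_prod_beta)
  have "(1 - \<alpha>) * real (k - 1) * card {\<sigma> \<in> colourings V E k. \<not> good v u \<sigma>}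
      = (\<Sum>(c, q)\<in>distinct_colour_pairs k. (1 - \<alpha>) * card (?\<Omega> c c))"
    unfolding mult.assoc bad by (simp add: sum_distrib_left case_prod_beta)
  also have "\<dots> \<le> (\<Sum>(c, q)\<in>distinct_colour_pairs k. real (card (?R c q)))"
    using alpha_iso_fun_card_image_ge(2)[OF iso_pair finite_colourings_vu[OF assms(1)]]
    by (intro sum_mono) auto
  finally show "(1 - \<alpha>) * real (k - 1) * card {\<sigma> \<in> colourings V E k. \<not> good v u \<sigma>}
      \<le> card (switch_reachable V E k v u)"
    using R by simp
qed

lemma pmf_STEP_good: "good v u X \<Longrightarrow> pmf (STEP V E k v u X) X = 1"
  by (simp add: STEP_def)

lemma pmf_STEP_switching_ge:
  assumes "\<not> good v u X" "X v \<in> {1..k}" "q \<in> {1..k} - {X v}"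
  shows "1 / real (k - 1) \<le> pmf (STEP V E k v u X) (switching V E v X q)"
proof -
  let ?S = "{1..k} - {X v}" and ?H = "\<lambda>q. switching V E v X q"
  have "?S \<noteq> {}" "finite ?S" using assms(3) by auto
  have "q \<in> ?S \<inter> ?H -` {?H q}" using assms(3) by simp
  then have "card (?S \<inter> ?H -` {?H q}) \<ge> 1"
    using \<open>finite ?S\<close> by (metis One_nat_def Suc_leI card_gt_0_iff empty_iff finite_Int)
  then have "1 / card ?S \<le> card (?S \<inter> ?H -` {?H q}) / card ?S"
    by (intro divide_right_mono) auto
  also have "\<dots> = pmf (STEP V E k v u X) (?H q)"
    using assms(1) measure_pmf_of_set[OF \<open>?S \<noteq> {}\<close> \<open>finite ?S\<close>]
    by (simp add: STEP_def pmf_map)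
  finally show ?thesis using assms(2) by simp
qed

lemma sum_pmf_STEP_ge_good:
  assumes "finite V" "\<sigma> \<in> colourings V E k" "good v u \<sigma>"
  shows "1 \<le> (\<Sum>X\<in>colourings V E k. pmf (STEP V E k v u X) \<sigma>)"
  using member_le_sum[of \<sigma> "colourings V E k" "\<lambda>X. pmf (STEP V E k v u X) \<sigma>"]
    assms finite_colourings pmf_STEP_good by fastforce

lemma sum_pmf_STEP_ge_switch_reachable:
  assumes "finite V" "v \<in> V" "\<sigma> \<in> switch_reachable V E k v u"
  shows "1 + 1 / real (k - 1) \<le> (\<Sum>X\<in>colourings V E k. pmf (STEP V E k v u X) \<sigma>)"
proof -
  obtain c q \<tau> where cq: "(c, q) \<in> distinct_colour_pairs k" and \<sigma>: "\<sigma> \<in> colourings_vu V E k v u q c"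
    and \<tau>: "\<tau> \<in> colourings_vu V E k v u c c" and sw: "switching V E v \<tau> q = \<sigma>"
    using assms(3) unfolding switch_reachable_def by blast
  have \<tau>_bad: "\<tau> \<in> colourings V E k" "\<not> good v u \<tau>"
    and \<sigma>_good: "\<sigma> \<in> colourings V E k" "good v u \<sigma>" and "\<sigma> \<noteq> \<tau>"
    using cq \<sigma> \<tau> unfolding colourings_vu_def distinct_colour_pairs_def good_def by auto
  have "1 / real (k - 1) \<le> pmf (STEP V E k v u \<tau>) \<sigma>"
    using pmf_STEP_switching_ge[OF \<tau>_bad(2)] colourings_range[OF \<tau>_bad(1) assms(2)]
      cq \<tau> sw unfolding colourings_vu_def distinct_colour_pairs_def by auto
  then have "1 + 1 / real (k - 1) \<le> (\<Sum>X\<in>{\<sigma>, \<tau>}. pmf (STEP V E k v u X) \<sigma>)"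
    using \<open>\<sigma> \<noteq> \<tau>\<close> pmf_STEP_good[OF \<sigma>_good(2)] by simp
  also have "\<dots> \<le> (\<Sum>X\<in>colourings V E k. pmf (STEP V E k v u X) \<sigma>)"
    using \<sigma>_good(1) \<tau>_bad(1) finite_colourings[OF assms(1)]
    by (intro sum_mono2) auto
  finally show ?thesis .
qed

theorem theorem3:
  fixes V :: "'a set" and E :: "'a \<Rightarrow> 'a \<Rightarrow> bool" and v u :: 'a and k :: nat and \<alpha> :: real
  assumes "simple_graph V E"
    and "v \<in> V" and "u \<in> V" and "v \<noteq> u" and "\<not> E v u"
    and "colourings V E k \<noteq> {}"
    and "{\<sigma> \<in> colourings V E k. good v u \<sigma>} \<noteq> {}"
    and "0 \<le> \<alpha>" and "\<alpha> \<le> 1"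
    and "\<forall>c\<in>{1..k}. \<forall>q\<in>{1..k}. c \<noteq> q \<longrightarrow>
           alpha_iso_fun \<alpha> (colourings_vu V E k v u c c) (colourings_vu V E k v u q c)
             (\<lambda>\<sigma>. switching V E v \<sigma> q)"
  shows "tv_dist (V \<rightarrow>\<^sub>E {1..k})
           (pmf_of_set {\<sigma> \<in> colourings V E k. good v u \<sigma>})
           (bind_pmf (pmf_of_set (colourings V E k)) (STEP V E k v u))
         \<le> \<alpha>"
proof -
  let ?\<Omega> = "colourings V E k"
  let ?G = "{\<sigma> \<in> ?\<Omega>. good v u \<sigma>}" and ?B = "{\<sigma> \<in> ?\<Omega>. \<not> good v u \<sigma>}"
  let ?\<nu>' = "bind_pmf (pmf_of_set ?\<Omega>) (STEP V E k v u)"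
  have "finite V" using assms(1) unfolding simple_graph_def by blast
  then have "finite ?\<Omega>" "finite ?G" by (simp_all add: finite_colourings)
  have "k \<ge> 2"
    using assms(7) colourings_range[OF _ assms(2)] colourings_range[OF _ assms(3)]
    unfolding good_def by fastforce
  have "card ?\<Omega> = card (?G \<union> ?B)" by (intro arg_cong[where f = card]) auto
  also have "\<dots> = card ?G + card ?B" using \<open>finite ?\<Omega>\<close> by (intro card_Un_disjoint) auto
  finally have pmf_\<nu>': "pmf ?\<nu>' \<sigma> = (\<Sum>X\<in>?\<Omega>. pmf (STEP V E k v u X) \<sigma>) / (card ?G + card ?B)" for \<sigma>
    using pmf_bind_pmf_of_set[OF assms(6) \<open>finite ?\<Omega>\<close>] by simp
  have "(\<Sum>\<sigma>\<in>?G. max 0 (1 / card ?G - pmf ?\<nu>' \<sigma>)) \<le> \<alpha>"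
  proof (rule sum_deficit_le[where W = "switch_reachable V E k v u" and b = "card ?B"
        and K = "real (k - 1)"])
    show "\<forall>\<sigma>\<in>?G. 1 / (card ?G + real (card ?B)) \<le> pmf ?\<nu>' \<sigma>"
      using sum_pmf_STEP_ge_good[OF \<open>finite V\<close>]
      unfolding pmf_\<nu>' by (auto intro: divide_right_mono)
    show "\<forall>\<sigma>\<in>switch_reachable V E k v u.
        (1 + 1 / real (k - 1)) / (card ?G + real (card ?B)) \<le> pmf ?\<nu>' \<sigma>"
      using sum_pmf_STEP_ge_switch_reachable[OF \<open>finite V\<close> assms(2)]
      unfolding pmf_\<nu>' by (auto intro: divide_right_mono)
  qed (use \<open>finite ?G\<close> assms(7,8) \<open>k \<ge> 2\<close> switch_reachable_subset_good[of V E k v u]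
         card_switch_reachable_ge[OF \<open>finite V\<close> assms(2,3,10)] in auto)
  then show ?thesis
    using tv_dist_pmf_of_set_le[OF \<open>finite ?G\<close> assms(7)] by blast
qed

end
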